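(* For all $n\ge1$, $k\ge1$ and every $\pi\in\mathbf{C}(n,k)$, the list $\mathcal{C}(\pi)$ contains every element of $\mathbf{C}(n,k)$ exactly once (so it has length $k^n n!$), each entry after the first is obtained from the preceding entry by a flip, and the first entry is obtained from the last entry by a flip of length $n$ (i.e. if $L$ is the last entry then $\mathrm{flip}_n(L)=\pi$).
   Context: Fix integers $n\ge1$, $k\ge1$. A $k$-coloured permutation of $\{1,\dots,n\}$ is a sequence $\pi=p_1p_2\cdots p_n$ with $p_i=v_i^{c_i}$, where $v_1\cdots v_n$ is a permutation of $\{1,\dots,n\}$ and each $c_i\in\{0,\dots,k-1\}$; the set of these is $\mathbf{C}(n,k)$. A pre-perm is a prefix $p_1\cdots p_j$ ($1\le j\le n$) of some element of $\mathbf{C}(n,k)$. For $p=v^c$ and integer $s$, $p^{+s}=v^{(c+s)\bmod k}$; for $\mathbf{p}=p_1\cdots p_j$, $\mathbf{p}^{+s}=p_1^{+s}\cdots p_j^{+s}$. For $1\le i\le n$, $\mathrm{flip}_i(p_1\cdots p_n)=p_i^{+1}p_{i-1}^{+1}\cdots p_1^{+1}p_{i+1}\cdots p_n$. For a pre-perm $\mathbf{p}$ of length $j$, $\rho(\mathbf{p})=r_1\cdots r_m$ ($m=kj$) is the concatenation $\mathbf{p}^{+(k-1)}\mathbf{p}^{+(k-2)}\cdots\mathbf{p}^{+0}$ viewed circularly (indices mod $m$), and $\rho(\mathbf{p})_i=r_{i-j+1}\cdots r_{i-1}$ (length $j-1$, indices mod $m$). The list $\mathcal{C}(\mathbf{p})$: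 if $j=1$, $\mathcal{C}(p_1)=p_1^{+0},p_1^{+1},\dots,p_1^{+(k-1)}$; if $j\ge2$, $\mathcal{C}(\mathbf{p})$ is the concatenation for $i=m,m-1,\dots,1$ of the lists obtained from $\mathcal{C}(\rho(\mathbf{p})_i)$ by appending $r_i$ to every entry. *)

theory Defs
  imports Main
begin

text \<open>A coloured symbol v^c is the pair (v, c). A (pre-)perm is a list of such pairs.\<close>

type_synonym csym = "nat \<times> nat"

definition Cnk :: "nat \<Rightarrow> nat \<Rightarrow> csym list set" where
  "Cnk n k = {ps. length ps = n \<and> distinct (map fst ps) \<and> set (map fst ps) = {1..n}
                  \<and> (\<forall>p\<in>set ps. snd p < k)}"

definition shift :: "nat \<Rightarrow> nat \<Rightarrow> csym \<Rightarrow> csym" where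
  "shift k s p = (fst p, (snd p + s) mod k)"

definition shiftl :: "nat \<Rightarrow> nat \<Rightarrow> csym list \<Rightarrow> csym list" where
  "shiftl k s ps = map (shift k s) ps"

definition flip :: "nat \<Rightarrow> nat \<Rightarrow> csym list \<Rightarrow> csym list" where
  "flip k i ps = shiftl k 1 (rev (take i ps)) @ drop i ps"

text \<open>rho(p) = p^{+(k-1)} p^{+(k-2)} ... p^{+0}, as a list r_1 ... r_m (r_i = rho ! (i-1)).\<close>
definition rho :: "nat \<Rightarrow> csym list \<Rightarrow> csym list" where
  "rho k ps = concat (map (\<lambda>t. shiftl k (k - 1 - t) ps) [0..<k])"

text \<open>rho(p)_i = r_{i-j+1} ... r_{i-1}, indices taken circularly mod m (1-based),
  for 1 <= i <= m, j = length p, m = k*j.\<close>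
definition rho_win :: "nat \<Rightarrow> csym list \<Rightarrow> nat \<Rightarrow> csym list" where
  "rho_win k ps i =
     (let j = length ps; r = rho k ps; m = length r
      in map (\<lambda>d. r ! ((i + m - j + d) mod m)) [0..<j - 1])"

lemma length_rho_win[simp]: "length (rho_win k ps i) = length ps - 1"
  by (simp add: rho_win_def Let_def)

function Clist :: "nat \<Rightarrow> csym list \<Rightarrow> csym list list" where
  "Clist k ps =
     (if length ps = 0 then []
      else if length ps = 1 then map (\<lambda>s. shiftl k s ps) [0..<k]
      else (let r = rho k ps; m = length r in
            concat (map (\<lambda>i. map (\<lambda>e. e @ [r ! (i - 1)]) (Clist k (rho_win k ps i)))
                        (rev [1..<m + 1]))))"
  by pat_completeness auto
termination
  by (relation "measure (\<lambda>(k, ps). length ps)") auto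

declare Clist.simps[simp del]

end

(* Induction on the length j of the pre-perm p.  The word \<rho>(p) contains every coloured
   symbol v^c with v in p exactly once, and its circular windows w_i = r_(i-j+1) ... r_i are
   rotations of p up to colours.  The i-th block of \<C>(p) is \<C>(butlast w_i) with r_i appended; by induction it
   lists, one flip apart, exactly the arrangements of p that end in r_i, starting at w_i.
   Stepping a window back by one moves r_(i+1) to the front with its colour raised by one,
   so w_i is the full flip of the last entry of block i+1; the same relation between the last
   block and w_0 = w_(kj) = p closes the cycle. *)

theory Submission
  imports Defs "HOL-Number_Theory.Cong"
begin

lemma length_concat_map_const:
  "(\<And>x. x \<in> set xs \<Longrightarrow> length (f x) = c) \<Longrightarrow> length (concat (map f xs)) = length xs * c"
  by (induction xs) auto

lemma nth_concat_map_upt_const: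
  assumes "\<And>t. t < K \<Longrightarrow> length (f t) = c" and "t < K" and "a < c"
  shows "concat (map f [0..<K]) ! (t * c + a) = f t ! a"
  using assms
proof (induction K)
  case (Suc K)
  have len: "length (concat (map f [0..<K])) = K * c"
    using Suc.prems(1) by (subst length_concat_map_const[where c = c]) auto
  show ?case
  proof (cases "t < K")
    case True
    have "t * c + a < Suc t * c" using Suc.prems(3) by simp
    also have "\<dots> \<le> K * c" using True by (intro mult_le_mono1) simp
    finally show ?thesis using Suc True by (simp add: nth_append len)
  next
    case False
    then have "t = K" using Suc.prems(2) by simp
    then show ?thesis by (simp add: nth_append len)
  qed
qed simp

lemma distinct_concat_map:
  "distinct xs \<Longrightarrow> (\<And>x. x \<in> set xs \<Longrightarrow> distinct (f x)) \<Longrightarrow>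
   (\<And>x y. x \<in> set xs \<Longrightarrow> y \<in> set xs \<Longrightarrow> x \<noteq> y \<Longrightarrow> set (f x) \<inter> set (f y) = {}) \<Longrightarrow>
   distinct (concat (map f xs))"
  by (induction xs) auto

lemma successively_concat_map:
  assumes "\<And>x. x \<in> set xs \<Longrightarrow> f x \<noteq> [] \<and> successively P (f x)"
    and "successively (\<lambda>x y. P (last (f x)) (hd (f y))) xs"
  shows "successively P (concat (map f xs))"
  using assms
proof (induction xs rule: induct_list012)
  case (3 x y zs)
  have "successively P (concat (map f (y # zs)))"
    using "3.IH"(2) "3.prems" by (simp add: successively_Cons)
  moreover have "f x \<noteq> []" "f y \<noteq> []" "successively P (f x)" "P (last (f x)) (hd (f y))"
    using "3.prems" by auto
  moreover have "concat (map f (x # y # zs)) = f x @ concat (map f (y # zs))"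
    and "hd (concat (map f (y # zs))) = hd (f y)"
    using \<open>f y \<noteq> []\<close> by simp_all
  ultimately show ?case
    by (metis successively_append_iff)
qed simp_all

lemma successively_upt_Suc: "successively (\<lambda>x y. y = Suc x) [a..<b]"
proof (induction b)
  case (Suc b)
  show ?case
  proof (cases "a < b")
    case True
    then have "last [a..<b] = b - 1" by (simp add: last_upt)
    then show ?thesis using Suc True by (simp add: successively_append_iff)
  next
    case False
    then have "[a..<Suc b] = [] \<or> [a..<Suc b] = [b]" by auto
    then show ?thesis by auto
  qed
qed simp

subsection \<open>Colour shifts\<close>

lemma fst_shift [simp]: "fst (shift k s p) = fst p"
  by (simp add: shift_def)

lemma snd_shift_less: "0 < k \<Longrightarrow> snd (shift k s p) < k"
  by (simp add: shift_def)

lemma shift_0: "snd p < k \<Longrightarrow> shift k 0 p = p"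
  by (simp add: shift_def)

lemma shift_shift: "shift k a (shift k b p) = shift k (a + b) p"
  by (simp add: shift_def mod_add_right_eq add.assoc add.commute add.left_commute)

lemma shift_cong_mod: "a mod k = b mod k \<Longrightarrow> shift k a p = shift k b p"
  by (simp add: shift_def) (metis mod_add_cong)

lemma shift_inj:
  assumes "shift k s p = shift k s' p" and "s < k" and "s' < k"
  shows "s = s'"
proof -
  have "[snd p + s = snd p + s'] (mod k)"
    using assms(1) by (simp add: shift_def cong_def)
  then have "[s = s'] (mod k)"
    by (simp add: cong_add_lcancel_nat)
  then show ?thesis
    using assms(2,3) by (simp add: cong_def)
qed

lemma shift_surj:
  assumes "fst q = fst p" and "snd p < k" and "snd q < k"
  shows "\<exists>s<k. shift k s p = q"
proof (intro exI conjI)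
  let ?s = "(snd q + k - snd p) mod k"
  show "?s < k" using assms(2) by simp
  have "(snd p + ?s) mod k = (snd q + k) mod k"
    using assms(2) by (simp add: mod_add_right_eq)
  then show "shift k ?s p = q"
    using assms(1,3) by (simp add: shift_def prod_eq_iff)
qed

lemma length_shiftl [simp]: "length (shiftl k s ps) = length ps"
  by (simp add: shiftl_def)

definition pre_perm :: "nat \<Rightarrow> csym list \<Rightarrow> bool" where
  "pre_perm k ps \<longleftrightarrow> distinct (map fst ps) \<and> (\<forall>p\<in>set ps. snd p < k)"

lemma pre_perm_butlast: "pre_perm k ps \<Longrightarrow> pre_perm k (butlast ps)"
  by (auto simp: pre_perm_def map_butlast distinct_butlast dest: in_set_butlastD)

subsection \<open>The circular word \<open>\<rho>\<close>\<close>

lemma length_rho [simp]: "length (rho k ps) = k * length ps"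
  unfolding rho_def by (subst length_concat_map_const[where c = "length ps"]) auto

lemma nth_rho:
  assumes "t < k" and "a < length ps"
  shows "rho k ps ! (t * length ps + a) = shift k (k - 1 - t) (ps ! a)"
  unfolding rho_def using assms
  by (subst nth_concat_map_upt_const[where c = "length ps"]) (auto simp: shiftl_def)

definition rho_circ :: "nat \<Rightarrow> csym list \<Rightarrow> nat \<Rightarrow> csym" where
  "rho_circ k ps s = rho k ps ! (s mod (k * length ps))"

lemma rho_circ_eq:
  assumes "0 < k" and "0 < length ps"
  shows "rho_circ k ps s = shift k (k - 1 - s div length ps mod k) (ps ! (s mod length ps))"
proof -
  have "s mod (k * length ps) = (s div length ps mod k) * length ps + s mod length ps"
    by (metis mod_mult2_eq mult.commute add.commute)
  then show ?thesis
    unfolding rho_circ_def using assms by (simp add: nth_rho)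
qed

lemma rho_circ_add_period: "rho_circ k ps (s + k * length ps) = rho_circ k ps s"
  by (simp add: rho_circ_def)

lemma nth_rho_eq_rho_circ: "s < k * length ps \<Longrightarrow> rho k ps ! s = rho_circ k ps s"
  by (simp add: rho_circ_def)

lemma fst_rho_circ: "0 < k \<Longrightarrow> 0 < length ps \<Longrightarrow> fst (rho_circ k ps s) = fst (ps ! (s mod length ps))"
  by (simp add: rho_circ_eq)

lemma snd_rho_circ_less: "0 < k \<Longrightarrow> 0 < length ps \<Longrightarrow> snd (rho_circ k ps s) < k"
  by (simp add: rho_circ_eq snd_shift_less)

lemma rho_circ_eq_shift_rho_circ_add:
  assumes "0 < k" and "0 < length ps"
  shows "rho_circ k ps s = shift k 1 (rho_circ k ps (s + length ps))"
proof -
  let ?j = "length ps" and ?q = "s div length ps mod k"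
  have "?q < k"
    using assms(1) by simp
  then have "(1 + (k - 1 - Suc (s div ?j) mod k)) mod k = (k - 1 - ?q) mod k"
    by (cases "Suc ?q = k") (auto simp: mod_Suc)
  moreover have "(s + ?j) div ?j = Suc (s div ?j)"
    using assms(2) div_add_self2[of ?j s] by linarith
  ultimately show ?thesis
    using assms by (simp add: rho_circ_eq shift_shift shift_cong_mod)
qed

lemma rho_circ_last_copy:
  assumes "0 < k" and "pre_perm k ps" and "d < length ps"
  shows "rho_circ k ps ((k - 1) * length ps + d) = ps ! d"
proof -
  have j: "0 < length ps"
    using assms(3) by linarith
  then have "((k - 1) * length ps + d) div length ps = k - 1"
    using assms(3) by (simp add: div_mult_self3)
  moreover have "snd (ps ! d) < k"
    using assms(2,3) by (simp add: pre_perm_def)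
  ultimately show ?thesis
    using assms(3) by (simp add: rho_circ_eq[OF assms(1) j] shift_0)
qed

lemma set_rho:
  assumes "0 < k" and "pre_perm k ps"
  shows "set (rho k ps) = set (map fst ps) \<times> {..<k}"
proof (cases "ps = []")
  case False
  show ?thesis
  proof (intro equalityI subsetI)
    fix p assume "p \<in> set (rho k ps)"
    then obtain s where "s < k * length ps" "p = rho_circ k ps s"
      by (auto simp: in_set_conv_nth nth_rho_eq_rho_circ)
    then show "p \<in> set (map fst ps) \<times> {..<k}"
      using assms(1) False by (auto simp: fst_rho_circ snd_rho_circ_less mem_Times_iff)
  next
    fix p assume "p \<in> set (map fst ps) \<times> {..<k}"
    then obtain a where a: "a < length ps" "fst p = fst (ps ! a)" and "snd p < k"
      by (auto simp: in_set_conv_nth mem_Times_iff)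
    moreover have "snd (ps ! a) < k"
      using assms(2) a(1) by (auto simp: pre_perm_def)
    ultimately obtain s where s: "s < k" "shift k s (ps ! a) = p"
      using shift_surj[of p "ps ! a" k] by auto
    have "(k - 1 - s) * length ps + a < Suc (k - 1 - s) * length ps"
      using a(1) by simp
    also have "\<dots> \<le> k * length ps"
      using s(1) by (intro mult_le_mono1) simp
    finally have "(k - 1 - s) * length ps + a < k * length ps" .
    moreover have "rho k ps ! ((k - 1 - s) * length ps + a) = p"
      using s a(1) by (simp add: nth_rho)
    ultimately show "p \<in> set (rho k ps)"
      by (metis length_rho nth_mem)
  qed
qed (simp add: rho_def shiftl_def)

lemma distinct_rho:
  assumes "0 < k" and "pre_perm k ps"
  shows "distinct (rho k ps)"
proof (rule card_distinct)
  have "card (set (rho k ps)) = length ps * k"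
    using assms distinct_card[of "map fst ps"]
    by (simp add: set_rho card_cartesian_product pre_perm_def)
  then show "card (set (rho k ps)) = length (rho k ps)" by simp
qed

text \<open>The window r_(i-j+1) ... r_i of \<open>\<rho>(ps)\<close>, read circularly (the offset \<open>(k - 1) j\<close> is \<open>-j\<close>
  modulo \<open>k j\<close>).\<close>
definition rho_frame :: "nat \<Rightarrow> csym list \<Rightarrow> nat \<Rightarrow> csym list" where
  "rho_frame k ps i = map (\<lambda>d. rho_circ k ps (i + (k - 1) * length ps + d)) [0..<length ps]"

lemma length_rho_frame [simp]: "length (rho_frame k ps i) = length ps"
  by (simp add: rho_frame_def)

lemma nth_rho_frame:
  "d < length ps \<Longrightarrow> rho_frame k ps i ! d = rho_circ k ps (i + (k - 1) * length ps + d)"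
  by (simp add: rho_frame_def)

lemma rho_win_eq_butlast_rho_frame:
  assumes "0 < k"
  shows "rho_win k ps i = butlast (rho_frame k ps i)"
proof -
  have "i + k * length ps - length ps = i + (k - 1) * length ps"
    using assms by (simp add: diff_mult_distrib)
  moreover have "butlast [0..<length ps] = [0..<length ps - 1]"
    by (simp add: butlast_conv_take)
  ultimately show ?thesis
    by (simp add: rho_win_def rho_frame_def rho_circ_def map_butlast[symmetric] Let_def)
qed

lemma last_rho_frame_conv:
  assumes "0 < length ps"
  shows "last (rho_frame k ps i) = rho_circ k ps (i + (k - 1) * length ps + (length ps - 1))"
proof -
  have "rho_frame k ps i \<noteq> []"
    using assms by (metis length_greater_0_conv length_rho_frame)
  then have "last (rho_frame k ps i) = rho_frame k ps i ! (length ps - 1)"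
    by (simp add: last_conv_nth)
  also have "\<dots> = rho_circ k ps (i + (k - 1) * length ps + (length ps - 1))"
    using assms by (intro nth_rho_frame) simp
  finally show ?thesis .
qed

lemma last_rho_frame:
  assumes "0 < k" and "0 < length ps" and "1 \<le> i" and "i \<le> k * length ps"
  shows "last (rho_frame k ps i) = rho k ps ! (i - 1)"
proof -
  have "length ps \<le> k * length ps" and "(k - 1) * length ps = k * length ps - length ps"
    using assms(1) by (simp_all add: diff_mult_distrib)
  then have "i + (k - 1) * length ps + (length ps - 1) = (i - 1) + k * length ps"
    using assms(2,3) by linarith
  then have "last (rho_frame k ps i) = rho_circ k ps ((i - 1) + k * length ps)"
    using last_rho_frame_conv[OF assms(2)] by simp
  also have "\<dots> = rho_circ k ps (i - 1)"
    by (rule rho_circ_add_period)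
  also have "\<dots> = rho k ps ! (i - 1)"
    using assms(3,4) by (intro nth_rho_eq_rho_circ[symmetric]) simp
  finally show ?thesis .
qed

lemma map_fst_rho_frame:
  assumes "0 < k"
  shows "map fst (rho_frame k ps i) = rotate i (map fst ps)"
proof (rule nth_equalityI)
  fix d assume "d < length (map fst (rho_frame k ps i))"
  then have d: "d < length ps" by simp
  then have "0 < length ps" by linarith
  have "i + (k - 1) * length ps + d = (d + i) + (k - 1) * length ps"
    by simp
  then have "(i + (k - 1) * length ps + d) mod length ps = (d + i) mod length ps"
    by (simp only: mod_mult_self1)
  then show "map fst (rho_frame k ps i) ! d = rotate i (map fst ps) ! d"
    using assms d \<open>0 < length ps\<close> by (simp add: nth_rho_frame fst_rho_circ nth_rotate add.commute)
qed simp

lemma rho_frame_0: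
  assumes "0 < k" and "pre_perm k ps"
  shows "rho_frame k ps 0 = ps"
proof (rule nth_equalityI)
  fix d assume "d < length (rho_frame k ps 0)"
  then show "rho_frame k ps 0 ! d = ps ! d"
    using nth_rho_frame[of d ps k 0] rho_circ_last_copy[OF assms, of d] by simp
qed simp

lemma rho_frame_add_period: "rho_frame k ps (i + k * length ps) = rho_frame k ps i"
proof -
  have "i + k * length ps + (k - 1) * length ps + d = (i + (k - 1) * length ps + d) + k * length ps"
    for d by simp
  then show ?thesis
    by (simp only: rho_frame_def rho_circ_add_period)
qed

text \<open>The flip of full length that links consecutive frames.\<close>
lemma rho_frame_Suc:
  assumes "0 < k" and "0 < length ps"
  shows "shift k 1 (last (rho_frame k ps (Suc i))) # butlast (rho_frame k ps (Suc i))
    = rho_frame k ps i"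
proof (rule nth_equalityI)
  let ?M = "(k - 1) * length ps"
  fix d assume "d < length (shift k 1 (last (rho_frame k ps (Suc i))) # butlast (rho_frame k ps (Suc i)))"
  then have d: "d < length ps"
    using assms(2) by simp
  show "(shift k 1 (last (rho_frame k ps (Suc i))) # butlast (rho_frame k ps (Suc i))) ! d
    = rho_frame k ps i ! d"
  proof (cases d)
    case 0
    have "Suc i + ?M + (length ps - 1) = i + ?M + length ps"
      using assms(2) by simp
    then have "last (rho_frame k ps (Suc i)) = rho_circ k ps (i + ?M + length ps)"
      using last_rho_frame_conv[OF assms(2)] by metis
    then show ?thesis
      using 0 assms rho_circ_eq_shift_rho_circ_add[OF assms, of "i + ?M"] by (simp add: nth_rho_frame)
  next
    case (Suc d')
    then have "Suc d' < length ps"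
      using d by simp
    then show ?thesis
      using Suc by (simp add: nth_butlast nth_rho_frame)
  qed
qed (use assms(2) in \<open>simp add: Suc_pred\<close>)

lemma pre_perm_rho_frame:
  assumes "0 < k" and "pre_perm k ps"
  shows "pre_perm k (rho_frame k ps i)"
proof (cases "ps = []")
  case False
  have "distinct (map fst (rho_frame k ps i))"
    using assms by (simp add: map_fst_rho_frame pre_perm_def)
  moreover have "\<forall>p\<in>set (rho_frame k ps i). snd p < k"
    using assms(1) False by (auto simp: rho_frame_def snd_rho_circ_less)
  ultimately show ?thesis
    by (simp add: pre_perm_def)
qed (simp add: rho_frame_def pre_perm_def)

subsection \<open>Arrangements and flips\<close>

definition arrangements :: "nat \<Rightarrow> csym list \<Rightarrow> csym list set" where
  "arrangements k ps =
    {qs. length qs = length ps \<and> pre_perm k qs \<and> set (map fst qs) = set (map fst ps)}"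

lemma snoc_in_arrangements_iff:
  assumes "pre_perm k (ws @ [x])"
  shows "e @ [x] \<in> arrangements k (ws @ [x]) \<longleftrightarrow> e \<in> arrangements k ws"
proof -
  have x: "fst x \<notin> set (map fst ws)" "snd x < k"
    using assms by (auto simp: pre_perm_def)
  show ?thesis
  proof
    assume "e @ [x] \<in> arrangements k (ws @ [x])"
    then have "fst x \<notin> set (map fst e)"
      and "insert (fst x) (set (map fst e)) = insert (fst x) (set (map fst ws))"
      by (auto simp: arrangements_def pre_perm_def)
    then have "set (map fst e) = set (map fst ws)"
      using x(1) by (metis Diff_insert_absorb)
    then show "e \<in> arrangements k ws"
      using \<open>e @ [x] \<in> arrangements k (ws @ [x])\<close> by (auto simp: arrangements_def pre_perm_def)
  next
    assume "e \<in> arrangements k ws"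
    then show "e @ [x] \<in> arrangements k (ws @ [x])"
      using x by (auto simp: arrangements_def pre_perm_def)
  qed
qed

lemma arrangements_rho_frame:
  assumes "0 < k"
  shows "arrangements k (rho_frame k ps i) = arrangements k ps"
  using assms by (simp add: arrangements_def map_fst_rho_frame flip: set_map)

lemma flip_snoc: "i \<le> length e \<Longrightarrow> flip k i (e @ [x]) = flip k i e @ [x]"
  by (simp add: flip_def)

lemma flip_snoc_length: "flip k (Suc (length e)) (e @ [x]) = shift k 1 x # flip k (length e) e"
  by (simp add: flip_def shiftl_def)

definition flip_adjacent :: "nat \<Rightarrow> nat \<Rightarrow> csym list \<Rightarrow> csym list \<Rightarrow> bool" where
  "flip_adjacent k j a b \<longleftrightarrow> (\<exists>i\<in>{1..j}. b = flip k i a)"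

lemma successively_flip_adjacent_snoc:
  assumes "\<And>e. e \<in> set es \<Longrightarrow> length e = j" and "successively (flip_adjacent k j) es"
  shows "successively (flip_adjacent k (Suc j)) (map (\<lambda>e. e @ [x]) es)"
  unfolding successively_map
  using assms(2)
proof (rule successively_mono)
  fix a b assume "a \<in> set es" and "flip_adjacent k j a b"
  then obtain i where "i \<in> {1..j}" and "b = flip k i a" and "length a = j"
    using assms(1) by (auto simp: flip_adjacent_def)
  then have "i \<in> {1..Suc j}" and "b @ [x] = flip k i (a @ [x])"
    by (simp_all add: flip_snoc)
  then show "flip_adjacent k (Suc j) (a @ [x]) (b @ [x])"
    by (auto simp: flip_adjacent_def)
qed

text \<open>Stated for arbitrary pre-perms: the recursion reaches windows whose values are not \<open>{1..j}\<close>.\<close>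
definition Clist_flip_cycle :: "nat \<Rightarrow> csym list \<Rightarrow> bool" where
  "Clist_flip_cycle k ps \<longleftrightarrow>
    distinct (Clist k ps) \<and> set (Clist k ps) = arrangements k ps
    \<and> length (Clist k ps) = k ^ length ps * fact (length ps)
    \<and> successively (flip_adjacent k (length ps)) (Clist k ps)
    \<and> hd (Clist k ps) = ps \<and> flip k (length ps) (last (Clist k ps)) = ps"

lemma Clist_ne_Nil: "0 < k \<Longrightarrow> Clist_flip_cycle k ps \<Longrightarrow> Clist k ps \<noteq> []"
  by (auto simp: Clist_flip_cycle_def)

lemma Clist_singleton: "Clist k [x] = map (\<lambda>s. [shift k s x]) [0..<k]"
  by (subst Clist.simps) (simp add: shiftl_def)

lemma Clist_flip_cycle_singleton:
  assumes "0 < k" and "pre_perm k [x]"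
  shows "Clist_flip_cycle k [x]"
proof -
  have x: "snd x < k"
    using assms(2) by (simp add: pre_perm_def)
  have "distinct (Clist k [x])"
    by (auto simp: Clist_singleton distinct_map inj_on_def dest: shift_inj)
  moreover have "set (Clist k [x]) = arrangements k [x]"
  proof (intro equalityI subsetI)
    fix q assume "q \<in> arrangements k [x]"
    then obtain y where "q = [y]" "fst y = fst x" "snd y < k"
      by (auto simp: arrangements_def pre_perm_def length_Suc_conv)
    then show "q \<in> set (Clist k [x])"
      using shift_surj[of y x k] x by (auto simp: Clist_singleton)
  qed (use assms(1) in \<open>auto simp: Clist_singleton arrangements_def pre_perm_def snd_shift_less\<close>)
  moreover have "successively (flip_adjacent k 1) (Clist k [x])"
    unfolding Clist_singleton successively_map
    by (rule successively_mono[OF successively_upt_Suc])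
      (auto simp: flip_adjacent_def flip_def shiftl_def shift_shift)
  moreover have "hd (Clist k [x]) = [x]"
    using assms(1) x by (simp add: Clist_singleton hd_map upt_conv_Cons shift_0)
  moreover have "flip k 1 (last (Clist k [x])) = [x]"
  proof -
    have "shift k 1 (shift k (k - 1) x) = shift k 0 x"
      using assms(1) by (simp add: shift_shift shift_cong_mod)
    then show ?thesis
      using assms(1) x by (simp add: Clist_singleton last_map flip_def shiftl_def shift_0)
  qed
  ultimately show ?thesis
    by (simp add: Clist_flip_cycle_def Clist_singleton)
qed

subsection \<open>The recursive step\<close>

definition frame_block :: "nat \<Rightarrow> csym list \<Rightarrow> nat \<Rightarrow> csym list list" where
  "frame_block k ps i =
    map (\<lambda>e. e @ [last (rho_frame k ps i)]) (Clist k (butlast (rho_frame k ps i)))"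

lemma Clist_eq_concat_frame_blocks:
  assumes "0 < k" and "2 \<le> length ps"
  shows "Clist k ps = concat (map (frame_block k ps) (rev [1..<k * length ps + 1]))"
proof -
  have "length ps \<noteq> 0" and "length ps \<noteq> 1" and j: "0 < length ps"
    using assms(2) by linarith+
  then have "Clist k ps = concat (map (\<lambda>i. map (\<lambda>e. e @ [rho k ps ! (i - 1)]) (Clist k (rho_win k ps i)))
      (rev [1..<k * length ps + 1]))"
    by (simp only: Clist.simps[of k ps] Let_def length_rho if_False)
  also have "\<dots> = concat (map (frame_block k ps) (rev [1..<k * length ps + 1]))"
    using assms
    by (intro arg_cong[where f = concat] map_cong refl)
      (auto simp: frame_block_def rho_win_eq_butlast_rho_frame last_rho_frame[OF assms(1) j])
  finally show ?thesis .
qed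

context
  fixes k :: nat and ps :: "csym list"
  assumes k_pos: "0 < k" and length_ps: "2 \<le> length ps" and pre_perm_ps: "pre_perm k ps"
    and frames_flip_cycle: "\<And>i. Clist_flip_cycle k (butlast (rho_frame k ps i))"
begin

lemma length_ps_pos: "0 < length ps"
  using length_ps by linarith

lemma period_pos: "0 < k * length ps"
  using k_pos length_ps_pos by (rule mult_pos_pos)

lemma set_frame_indices: "set (rev [1..<k * length ps + 1]) = {1..k * length ps}"
  by (auto simp del: upt_Suc)

lemma rho_frame_ne_Nil: "rho_frame k ps i \<noteq> []"
  using length_ps_pos by (metis length_greater_0_conv length_rho_frame)

lemma length_Clist_frame_elem:
  "e \<in> set (Clist k (butlast (rho_frame k ps i))) \<Longrightarrow> length e = length ps - 1"
  using frames_flip_cycle[of i] by (simp add: Clist_flip_cycle_def arrangements_def)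

lemma length_frame_block:
  "length (frame_block k ps i) = k ^ (length ps - 1) * fact (length ps - 1)"
  using frames_flip_cycle[of i] by (simp add: frame_block_def Clist_flip_cycle_def)

lemma frame_block_ne_Nil: "frame_block k ps i \<noteq> []"
  using k_pos by (simp add: length_frame_block flip: length_greater_0_conv)

lemma hd_frame_block: "hd (frame_block k ps i) = rho_frame k ps i"
  using frames_flip_cycle[of i] Clist_ne_Nil[OF k_pos frames_flip_cycle[of i]] rho_frame_ne_Nil[of i]
  by (simp add: frame_block_def hd_map Clist_flip_cycle_def)

lemma flip_last_frame_block:
  "flip k (length ps) (last (frame_block k ps (Suc i))) = rho_frame k ps i"
proof -
  let ?f = "rho_frame k ps (Suc i)"
  define L where "L = last (Clist k (butlast ?f))"
  have ne: "Clist k (butlast ?f) \<noteq> []"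
    by (rule Clist_ne_Nil[OF k_pos frames_flip_cycle])
  then have "length L = length ps - 1"
    by (intro length_Clist_frame_elem[where i = "Suc i"]) (simp add: L_def)
  moreover have "flip k (length ps - 1) L = butlast ?f"
    using frames_flip_cycle[of "Suc i"] by (simp add: L_def Clist_flip_cycle_def)
  moreover have "length ps = Suc (length ps - 1)"
    using length_ps by simp
  ultimately have "flip k (length ps) (L @ [last ?f]) = shift k 1 (last ?f) # butlast ?f"
    by (metis flip_snoc_length)
  also have "\<dots> = rho_frame k ps i"
    using k_pos length_ps by (intro rho_frame_Suc) linarith+
  finally show ?thesis
    using ne by (simp add: frame_block_def last_map L_def)
qed

lemma set_frame_block:
  "set (frame_block k ps i)
    = (\<lambda>e. e @ [last (rho_frame k ps i)]) ` arrangements k (butlast (rho_frame k ps i))"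
  using frames_flip_cycle[of i] by (simp add: frame_block_def Clist_flip_cycle_def)

lemma snoc_last_rho_frame_in_arrangements_iff:
  "e @ [last (rho_frame k ps i)] \<in> arrangements k ps
    \<longleftrightarrow> e \<in> arrangements k (butlast (rho_frame k ps i))"
proof -
  have "rho_frame k ps i = butlast (rho_frame k ps i) @ [last (rho_frame k ps i)]"
    using rho_frame_ne_Nil by simp
  then show ?thesis
    using snoc_in_arrangements_iff[of k "butlast (rho_frame k ps i)" "last (rho_frame k ps i)" e]
      pre_perm_rho_frame[OF k_pos pre_perm_ps, of i] arrangements_rho_frame[OF k_pos, of ps i]
    by simp
qed

lemma length_Clist_step: "length (Clist k ps) = k ^ length ps * fact (length ps)"
proof -
  obtain j where j: "length ps = Suc j"
    using length_ps by (cases "length ps") auto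
  have "length (Clist k ps) = k * length ps * (k ^ j * fact j)"
    unfolding Clist_eq_concat_frame_blocks[OF k_pos length_ps]
    by (subst length_concat_map_const[where c = "k ^ j * fact j"])
      (simp_all add: length_frame_block j del: upt_Suc)
  then show ?thesis
    using j by (simp add: algebra_simps)
qed

lemma distinct_Clist_step: "distinct (Clist k ps)"
  unfolding Clist_eq_concat_frame_blocks[OF k_pos length_ps]
proof (rule distinct_concat_map)
  fix i assume "i \<in> set (rev [1..<k * length ps + 1])"
  show "distinct (frame_block k ps i)"
    using frames_flip_cycle[of i]
    by (simp add: frame_block_def distinct_map inj_on_def Clist_flip_cycle_def)
next
  fix x y assume "x \<in> set (rev [1..<k * length ps + 1])" "y \<in> set (rev [1..<k * length ps + 1])"
    and "x \<noteq> y"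
  then have "rho k ps ! (x - 1) \<noteq> rho k ps ! (y - 1)"
    using distinct_rho[OF k_pos pre_perm_ps] by (auto simp: nth_eq_iff_index_eq)
  then have "last (rho_frame k ps x) \<noteq> last (rho_frame k ps y)"
    using \<open>x \<in> _\<close> \<open>y \<in> _\<close> by (auto simp: last_rho_frame[OF k_pos length_ps_pos])
  then show "set (frame_block k ps x) \<inter> set (frame_block k ps y) = {}"
    by (auto simp: frame_block_def)
qed simp

lemma set_Clist_step: "set (Clist k ps) = arrangements k ps"
proof -
  have "set (Clist k ps) = (\<Union>i\<in>{1..k * length ps}. set (frame_block k ps i))"
    unfolding Clist_eq_concat_frame_blocks[OF k_pos length_ps] set_concat set_map set_frame_indices
      image_image ..
  also have "\<dots> = arrangements k ps"
  proof (intro equalityI subsetI)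
    fix q assume "q \<in> (\<Union>i\<in>{1..k * length ps}. set (frame_block k ps i))"
    then show "q \<in> arrangements k ps"
      by (auto simp: set_frame_block snoc_last_rho_frame_in_arrangements_iff)
  next
    fix q assume q: "q \<in> arrangements k ps"
    then have "q \<noteq> []"
      using length_ps by (auto simp: arrangements_def)
    then have "last q \<in> set q"
      by simp
    then have "last q \<in> set (rho k ps)"
      using q k_pos pre_perm_ps by (auto simp: set_rho arrangements_def pre_perm_def mem_Times_iff)
    then obtain s where s: "s < k * length ps" "rho k ps ! s = last q"
      by (auto simp: in_set_conv_nth)
    have last_frame: "last (rho_frame k ps (Suc s)) = last q"
      using s by (simp add: last_rho_frame[OF k_pos length_ps_pos])
    have "butlast q @ [last (rho_frame k ps (Suc s))] \<in> arrangements k ps"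
      using q \<open>q \<noteq> []\<close> by (simp add: last_frame)
    then have "butlast q \<in> arrangements k (butlast (rho_frame k ps (Suc s)))"
      by (simp only: snoc_last_rho_frame_in_arrangements_iff)
    then have "q \<in> set (frame_block k ps (Suc s))"
      using \<open>q \<noteq> []\<close> by (auto simp: set_frame_block last_frame intro!: image_eqI[where x = "butlast q"])
    then show "q \<in> (\<Union>i\<in>{1..k * length ps}. set (frame_block k ps i))"
      using s(1) by force
  qed
  finally show ?thesis .
qed

lemma successively_Clist_step: "successively (flip_adjacent k (length ps)) (Clist k ps)"
  unfolding Clist_eq_concat_frame_blocks[OF k_pos length_ps]
proof (rule successively_concat_map)
  fix i
  have "successively (flip_adjacent k (length ps - 1)) (Clist k (butlast (rho_frame k ps i)))"
    using frames_flip_cycle[of i] by (simp add: Clist_flip_cycle_def)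
  with length_Clist_frame_elem
  have "successively (flip_adjacent k (Suc (length ps - 1))) (frame_block k ps i)"
    unfolding frame_block_def by (rule successively_flip_adjacent_snoc)
  moreover have "Suc (length ps - 1) = length ps"
    using length_ps by simp
  ultimately show "frame_block k ps i \<noteq> [] \<and> successively (flip_adjacent k (length ps)) (frame_block k ps i)"
    using frame_block_ne_Nil by simp
next
  have linked: "flip_adjacent k (length ps) (last (frame_block k ps (Suc i))) (hd (frame_block k ps i))"
    for i
    using length_ps_pos
    by (auto simp: flip_adjacent_def hd_frame_block flip_last_frame_block Suc_le_eq
        intro!: bexI[of _ "length ps"])
  show "successively (\<lambda>x y. flip_adjacent k (length ps) (last (frame_block k ps x))
      (hd (frame_block k ps y))) (rev [1..<k * length ps + 1])"
    unfolding successively_rev by (rule successively_mono[OF successively_upt_Suc]) (simp add: linked)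
qed

lemma hd_Clist_step: "hd (Clist k ps) = ps"
proof -
  have "[1..<k * length ps + 1] = [1..<k * length ps] @ [k * length ps]"
    using period_pos by (metis One_nat_def Suc_eq_plus1 Suc_leI upt_Suc_append)
  then have "hd (Clist k ps) = rho_frame k ps (0 + k * length ps)"
    using frame_block_ne_Nil
    by (simp add: Clist_eq_concat_frame_blocks[OF k_pos length_ps] hd_frame_block del: upt_Suc)
  also have "\<dots> = ps"
    by (simp only: rho_frame_add_period rho_frame_0[OF k_pos pre_perm_ps])
  finally show ?thesis .
qed

lemma flip_last_Clist_step: "flip k (length ps) (last (Clist k ps)) = ps"
proof -
  have "[1..<k * length ps + 1] = 1 # [2..<k * length ps + 1]"
    using period_pos by (simp add: upt_conv_Cons numeral_2_eq_2 del: upt_Suc)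
  then have "last (Clist k ps) = last (frame_block k ps (Suc 0))"
    using frame_block_ne_Nil
    by (simp add: Clist_eq_concat_frame_blocks[OF k_pos length_ps] del: upt_Suc)
  then show ?thesis
    by (simp add: flip_last_frame_block rho_frame_0[OF k_pos pre_perm_ps])
qed

lemma Clist_flip_cycle_step: "Clist_flip_cycle k ps"
  by (simp add: Clist_flip_cycle_def distinct_Clist_step set_Clist_step length_Clist_step
      successively_Clist_step hd_Clist_step flip_last_Clist_step)

end

lemma pre_perm_imp_Clist_flip_cycle:
  assumes "0 < k" and "pre_perm k ps" and "ps \<noteq> []"
  shows "Clist_flip_cycle k ps"
  using assms(2,3)
proof (induction ps rule: length_induct)
  case (1 ps)
  show ?case
  proof (cases "length ps = 1")
    case True
    then obtain x where "ps = [x]"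
      by (auto simp: length_Suc_conv)
    then show ?thesis
      using assms(1) "1.prems"(1) by (simp add: Clist_flip_cycle_singleton)
  next
    case False
    moreover have "length ps \<noteq> 0"
      using "1.prems"(2) by simp
    ultimately have "2 \<le> length ps"
      by linarith
    moreover have "Clist_flip_cycle k (butlast (rho_frame k ps i))" for i
    proof (rule "1.IH"[rule_format])
      show "length (butlast (rho_frame k ps i)) < length ps"
        using "1.prems"(2) by simp
      show "pre_perm k (butlast (rho_frame k ps i))"
        using pre_perm_butlast pre_perm_rho_frame assms(1) "1.prems"(1) by blast
      show "butlast (rho_frame k ps i) \<noteq> []"
        using \<open>2 \<le> length ps\<close> by (simp flip: length_greater_0_conv)
    qed
    ultimately show ?thesis
      using Clist_flip_cycle_step assms(1) "1.prems"(1) by blast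
  qed
qed

theorem theorem3:
  fixes n k :: nat and \<pi> :: "csym list"
  assumes "n \<ge> 1" and "k \<ge> 1" and "\<pi> \<in> Cnk n k"
  shows "distinct (Clist k \<pi>) \<and> set (Clist k \<pi>) = Cnk n k
       \<and> length (Clist k \<pi>) = k ^ n * fact n
       \<and> (\<forall>t. Suc t < length (Clist k \<pi>) \<longrightarrow>
              (\<exists>i\<in>{1..n}. Clist k \<pi> ! Suc t = flip k i (Clist k \<pi> ! t)))
       \<and> hd (Clist k \<pi>) = \<pi>
       \<and> flip k n (last (Clist k \<pi>)) = \<pi>"
proof -
  have "length \<pi> = n" and "pre_perm k \<pi>" and "arrangements k \<pi> = Cnk n k"
    using assms(3) by (auto simp: Cnk_def pre_perm_def arrangements_def)
  moreover have "\<pi> \<noteq> []"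
    using assms(1) \<open>length \<pi> = n\<close> by auto
  then have "Clist_flip_cycle k \<pi>"
    using assms(2) \<open>pre_perm k \<pi>\<close> by (simp add: pre_perm_imp_Clist_flip_cycle)
  ultimately show ?thesis
    by (auto simp: Clist_flip_cycle_def successively_conv_nth flip_adjacent_def)
qed

end
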